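(* Let $M\subset\mathbb{R}^2$ be open with coordinates $(x,u)$, let $M^{(1)}$ be the first-order jet space with coordinates $(x,u,u_x)$, and consider the ODE $u_{xx}=\phi(x,u,u_x)$ with associated vector field $\mathbf{A}=\partial_x+u_x\partial_u+\phi\,\partial_{u_x}$. Let $(\partial_u,\lambda_1)$ and $(\partial_u,\lambda_2)$ be the canonical representatives of two non-equivalent generalized $\mathcal{C}^\infty$-symmetries of this ODE. Let $\mathbf{X}_i=\partial_u+\lambda_i\partial_{u_x}$, $\rho=\dfrac{\mathbf{X}_1(\lambda_2)-\mathbf{X}_2(\lambda_1)}{\lambda_1-\lambda_2}$, let $f_1,f_2\in C^\infty(M^{(1)})$ satisfy $\dfrac{\mathbf{X}_1(f_2)}{f_2}=\dfrac{\mathbf{X}_2(f_1)}{f_1}=\rho$, let $\mathbf{Y}_i=f_i\mathbf{X}_i$, $\rho_i=\lambda_i-\mathbf{A}(f_i)/f_i$, and let $g_1,g_2\in C^\infty(M^{(1)})$ satisfy $\mathbf{A}(g_1)=\rho_1g_1$, $\mathbf{Y}_2(g_1)=0$, $\mathbf{A}(g_2)=\rho_2g_2$, $\mathbf{Y}_1(g_2)=0$. Then two functionally independent first integrals $I_1$ and $I_2$ of $\mathbf{A}$, associated to $(\partial_u,\lambda_1)$ and $(\partial_u,\lambda_2)$ respectively, can be found by quadratures from the systems $$(I_1)_x=\frac{\lambda_1u_x-\phi}{f_2g_2(\lambda_2-\lambda_1)},\quad (I_1)_u=\frac{-\lambda_1}{f_2g_2(\lambda_2-\lambda_1)},\quad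 (I_1)_{u_x}=\frac{1}{f_2g_2(\lambda_2-\lambda_1)},$$ $$(I_2)_x=\frac{\lambda_2u_x-\phi}{f_1g_1(\lambda_1-\lambda_2)},\quad (I_2)_u=\frac{-\lambda_2}{f_1g_1(\lambda_1-\lambda_2)},\quad (I_2)_{u_x}=\frac{1}{f_1g_1(\lambda_1-\lambda_2)}.$$
   Context: All functions are smooth on $M^{(1)}$ and all statements are local, on an open set where $\lambda_1-\lambda_2$, $f_1,f_2,g_1,g_2$ do not vanish. For smooth $\xi,\eta,\lambda$ on $M^{(1)}$ and $\mathbf{v}=\xi\partial_x+\eta\partial_u$, the $\lambda$-prolongation is $\mathbf{v}^{[\lambda,(1)]}=\mathbf{v}+\big((\mathbf{A}+\lambda)(\eta)-(\mathbf{A}+\lambda)(\xi)u_x\big)\partial_{u_x}$. The pair $(\mathbf{v},\lambda)$ is a generalized $\mathcal{C}^\infty$-symmetry of the ODE if $[\mathbf{v}^{[\lambda,(1)]},\mathbf{A}]=\lambda\,\mathbf{v}^{[\lambda,(1)]}-(\mathbf{A}+\lambda)(\xi)\,\mathbf{A}$. A first integral of $\mathbf{A}$ associated to $(\mathbf{v},\lambda)$ is a function $I\in C^\infty(M^{(1)})$ with $\mathbf{A}(I)=\mathbf{v}^{[\lambda,(1)]}(I)=0$. Two generalized $\mathcal{C}^\infty$-symmetries $(\mathbf{v}_1,\lambda_1)$, $(\mathbf{v}_2,\lambda_2)$ are $\mathbf{A}$-equivalent if $\{\mathbf{A},\mathbf{v}_1^{[\lambda_1,(1)]},\mathbf{v}_2^{[\lambda_2,(1)]}\}$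 is linearly dependent over $C^\infty(M^{(1)})$. If $Q=\eta-\xi u_x$, the canonical representative of the class of $(\mathbf{v},\lambda)$ is $(\partial_u,\lambda+\mathbf{A}(Q)/Q)$. *)

theory Defs
  imports "HOL-Analysis.Analysis"
begin

text \<open>Points of the first-order jet space M^(1) with coordinates (x, u, u_x).\<close>
type_synonym jet = "real \<times> real \<times> real"

text \<open>Coordinate directions: 0 = x, 1 = u, 2 = u_x.\<close>
definition coord_dir :: "nat \<Rightarrow> jet" where
  "coord_dir i = (if i = 0 then (1,0,0) else if i = 1 then (0,1,0) else (0,0,1))"

definition pd :: "nat \<Rightarrow> (jet \<Rightarrow> real) \<Rightarrow> jet \<Rightarrow> real" where
  "pd i f p = frechet_derivative f (at p) (coord_dir i)"

abbreviation "pd_x \<equiv> pd 0"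
abbreviation "pd_u \<equiv> pd 1"
abbreviation "pd_ux \<equiv> pd 2"

fun iter_pd :: "nat list \<Rightarrow> (jet \<Rightarrow> real) \<Rightarrow> jet \<Rightarrow> real" where
  "iter_pd [] f = f"
| "iter_pd (i # is) f = pd i (iter_pd is f)"

definition smooth_on :: "jet set \<Rightarrow> (jet \<Rightarrow> real) \<Rightarrow> bool" where
  "smooth_on U f \<longleftrightarrow> (\<forall>ds. (\<forall>i\<in>set ds. i < 3) \<longrightarrow> (\<forall>p\<in>U. iter_pd ds f differentiable (at p)))"

definition vf :: "(jet \<Rightarrow> real) \<Rightarrow> (jet \<Rightarrow> real) \<Rightarrow> (jet \<Rightarrow> real) \<Rightarrow> (jet \<Rightarrow> real) \<Rightarrow> jet \<Rightarrow> real" where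
  "vf a b c h p = a p * pd_x h p + b p * pd_u h p + c p * pd_ux h p"

definition Avf :: "(jet \<Rightarrow> real) \<Rightarrow> (jet \<Rightarrow> real) \<Rightarrow> jet \<Rightarrow> real" where
  "Avf \<phi> = vf (\<lambda>_. 1) (\<lambda>(x,u,ux). ux) \<phi>"

text \<open>Third coefficient of the lambda-prolongation of v = xi d_x + eta d_u:
  (A + lambda)(eta) - (A + lambda)(xi) u_x.\<close>
definition prol_coeff :: "(jet \<Rightarrow> real) \<Rightarrow> (jet \<Rightarrow> real) \<Rightarrow> (jet \<Rightarrow> real) \<Rightarrow> (jet \<Rightarrow> real) \<Rightarrow> jet \<Rightarrow> real" where
  "prol_coeff \<phi> \<xi> \<eta> lam = (\<lambda>p. (Avf \<phi> \<eta> p + lam p * \<eta> p) - (Avf \<phi> \<xi> p + lam p * \<xi> p) * (snd (snd p)))"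

definition prol :: "(jet \<Rightarrow> real) \<Rightarrow> (jet \<Rightarrow> real) \<Rightarrow> (jet \<Rightarrow> real) \<Rightarrow> (jet \<Rightarrow> real) \<Rightarrow> (jet \<Rightarrow> real) \<Rightarrow> jet \<Rightarrow> real" where
  "prol \<phi> \<xi> \<eta> lam = vf \<xi> \<eta> (prol_coeff \<phi> \<xi> \<eta> lam)"

text \<open>(v, lambda) is a generalized C-infinity symmetry on U:
  [v^[lambda,(1)], A] = lambda v^[lambda,(1)] - (A + lambda)(xi) A,
  as an identity of derivations acting on smooth functions on U.\<close>
definition gen_sym :: "jet set \<Rightarrow> (jet \<Rightarrow> real) \<Rightarrow> (jet \<Rightarrow> real) \<Rightarrow> (jet \<Rightarrow> real) \<Rightarrow> (jet \<Rightarrow> real) \<Rightarrow> bool" where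
  "gen_sym U \<phi> \<xi> \<eta> lam \<longleftrightarrow>
     (\<forall>h. smooth_on U h \<longrightarrow> (\<forall>p\<in>U.
        prol \<phi> \<xi> \<eta> lam (Avf \<phi> h) p - Avf \<phi> (prol \<phi> \<xi> \<eta> lam h) p
        = lam p * prol \<phi> \<xi> \<eta> lam h p - (Avf \<phi> \<xi> p + lam p * \<xi> p) * Avf \<phi> h p))"

text \<open>A-equivalence: {A, v1^[lambda1,(1)], v2^[lambda2,(1)]} linearly dependent
  over the ring C-infinity(U) (coefficientwise as vector fields).\<close>
definition A_equiv :: "jet set \<Rightarrow> (jet \<Rightarrow> real) \<Rightarrow> (jet \<Rightarrow> real) \<Rightarrow> (jet \<Rightarrow> real) \<Rightarrow> (jet \<Rightarrow> real)
    \<Rightarrow> (jet \<Rightarrow> real) \<Rightarrow> (jet \<Rightarrow> real) \<Rightarrow> (jet \<Rightarrow> real) \<Rightarrow> bool" where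
  "A_equiv U \<phi> \<xi>1 \<eta>1 lam1 \<xi>2 \<eta>2 lam2 \<longleftrightarrow>
     (\<exists>a b c. smooth_on U a \<and> smooth_on U b \<and> smooth_on U c \<and>
        (\<exists>p\<in>U. a p \<noteq> 0 \<or> b p \<noteq> 0 \<or> c p \<noteq> 0) \<and>
        (\<forall>p\<in>U. a p * 1 + b p * \<xi>1 p + c p * \<xi>2 p = 0 \<and>
                a p * snd (snd p) + b p * \<eta>1 p + c p * \<eta>2 p = 0 \<and>
                a p * \<phi> p + b p * prol_coeff \<phi> \<xi>1 \<eta>1 lam1 p + c p * prol_coeff \<phi> \<xi>2 \<eta>2 lam2 p = 0))"

definition first_integral_assoc :: "jet set \<Rightarrow> (jet \<Rightarrow> real) \<Rightarrow> (jet \<Rightarrow> real) \<Rightarrow> (jet \<Rightarrow> real)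
    \<Rightarrow> (jet \<Rightarrow> real) \<Rightarrow> (jet \<Rightarrow> real) \<Rightarrow> bool" where
  "first_integral_assoc V \<phi> \<xi> \<eta> lam I \<longleftrightarrow>
     smooth_on V I \<and> (\<forall>p\<in>V. Avf \<phi> I p = 0 \<and> prol \<phi> \<xi> \<eta> lam I p = 0)"

definition func_indep :: "jet set \<Rightarrow> (jet \<Rightarrow> real) \<Rightarrow> (jet \<Rightarrow> real) \<Rightarrow> bool" where
  "func_indep V I J \<longleftrightarrow>
     (\<forall>p\<in>V. \<forall>a b. (\<forall>i<3. a * pd i I p + b * pd i J p = 0) \<longrightarrow> a = 0 \<and> b = 0)"

definition solves_sys :: "jet set \<Rightarrow> (jet \<Rightarrow> real) \<Rightarrow> (jet \<Rightarrow> real) \<Rightarrow> (jet \<Rightarrow> real) \<Rightarrow> (jet \<Rightarrow> real) \<Rightarrow> bool" where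
  "solves_sys V I P Q R \<longleftrightarrow>
     (\<forall>p\<in>V. (I has_derivative (\<lambda>(dx, du, dux). P p * dx + Q p * du + R p * dux)) (at p))"

definition Xvf :: "(jet \<Rightarrow> real) \<Rightarrow> (jet \<Rightarrow> real) \<Rightarrow> jet \<Rightarrow> real" where
  "Xvf lam = vf (\<lambda>_. 0) (\<lambda>_. 1) lam"

end

theory Submission
  imports Defs
begin

text \<open>For \<open>{a, b} = {1, 2}\<close>, the 1-form \<open>\<omega>\<^sub>a = (\<lambda>\<^sub>a u\<^sub>x - \<phi>) dx - \<lambda>\<^sub>a du + du\<^sub>x\<close> annihilates both \<open>A\<close> and
  \<open>X\<^sub>a = \<partial>\<^sub>u + \<lambda>\<^sub>a \<partial>\<^sub>u\<^sub>x\<close>. The determining equations \<open>X\<^sub>a(\<phi>) = A(\<lambda>\<^sub>a) + \<lambda>\<^sub>a\<^sup>2\<close> of the two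
  symmetries, together with the equations defining \<open>f\<^sub>b\<close> and \<open>g\<^sub>b\<close>, say exactly that
  \<open>1 / (f\<^sub>b g\<^sub>b (\<lambda>\<^sub>b - \<lambda>\<^sub>a))\<close> is an integrating factor of \<open>\<omega>\<^sub>a\<close>. By the Poincare lemma on
  a ball the resulting closed form is locally exact, and any potential \<open>I\<^sub>a\<close> is annihilated by
  \<open>A\<close> and \<open>X\<^sub>a\<close>. The differentials of \<open>I\<^sub>1\<close>, \<open>I\<^sub>2\<close> are independent because their
  \<open>(du, du\<^sub>x)\<close>-components are proportional to \<open>(-\<lambda>\<^sub>1, 1)\<close> and \<open>(-\<lambda>\<^sub>2, 1)\<close>.\<close>

section \<open>Derivatives on the jet space\<close>

definition jet_form :: "real \<Rightarrow> real \<Rightarrow> real \<Rightarrow> jet \<Rightarrow> real" where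
  "jet_form a b c = (\<lambda>(x, y, z). x * a + y * b + z * c)"

lemma jet_form_apply: "jet_form a b c v = fst v * a + fst (snd v) * b + snd (snd v) * c"
  by (simp add: jet_form_def split_beta)

lemma bounded_linear_jet_form: "bounded_linear (jet_form a b c)"
  unfolding jet_form_def split_beta by (auto intro!: bounded_linear_intros)

lemma has_derivative_pd:
  assumes "f differentiable (at p)"
  shows "(f has_derivative jet_form (pd 0 f p) (pd 1 f p) (pd 2 f p)) (at p)"
proof -
  let ?F = "frechet_derivative f (at p)"
  have F: "(f has_derivative ?F) (at p)"
    using assms frechet_derivative_works by blast
  then have lin: "linear ?F"
    using has_derivative_linear by blast
  have "?F (x, y, z) = jet_form (pd 0 f p) (pd 1 f p) (pd 2 f p) (x, y, z)" for x y z
  proof -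
    have "(x, y, z) = x *\<^sub>R (1, 0, 0) + y *\<^sub>R (0, 1, 0) + z *\<^sub>R (0, 0, 1 :: real)"
      by simp
    then have "?F (x, y, z) = x *\<^sub>R ?F (1, 0, 0) + y *\<^sub>R ?F (0, 1, 0) + z *\<^sub>R ?F (0, 0, 1)"
      by (simp only: linear_add[OF lin] linear_scale[OF lin])
    then show ?thesis
      by (simp add: pd_def coord_dir_def jet_form_apply)
  qed
  then have "?F = jet_form (pd 0 f p) (pd 1 f p) (pd 2 f p)"
    by (auto intro!: ext)
  then show ?thesis
    using F by simp
qed

lemma pd_eq_jet_form:
  assumes "(f has_derivative jet_form a b c) (at p)"
  shows "pd 0 f p = a" "pd 1 f p = b" "pd 2 f p = c"
  using frechet_derivative_at[OF assms, symmetric]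
  by (simp_all add: pd_def coord_dir_def jet_form_apply)

lemma has_derivative_jet_form_const: "((\<lambda>_. k) has_derivative jet_form 0 0 0) (at p)"
proof -
  have "jet_form 0 0 0 = (\<lambda>_. 0)"
    by (auto simp: jet_form_apply)
  then show ?thesis
    by (simp add: has_derivative_const)
qed

lemma has_derivative_jet_form_x: "((\<lambda>q. fst q) has_derivative jet_form 1 0 0) (at p)"
proof -
  have "jet_form 1 0 0 = fst"
    by (auto simp: jet_form_apply)
  then show ?thesis
    by (simp add: has_derivative_fst[OF has_derivative_ident])
qed

lemma has_derivative_jet_form_u: "((\<lambda>q. fst (snd q)) has_derivative jet_form 0 1 0) (at p)"
proof -
  have "jet_form 0 1 0 = (\<lambda>q. fst (snd q))"
    by (auto simp: jet_form_apply)
  then show ?thesis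
    by (auto intro!: derivative_eq_intros)
qed

lemma has_derivative_jet_form_ux: "((\<lambda>q. snd (snd q)) has_derivative jet_form 0 0 1) (at p)"
proof -
  have "jet_form 0 0 1 = (\<lambda>q. snd (snd q))"
    by (auto simp: jet_form_apply)
  then show ?thesis
    by (auto intro!: derivative_eq_intros)
qed

lemma has_derivative_jet_form_add:
  assumes "(f has_derivative jet_form a b c) (at p)" "(g has_derivative jet_form a' b' c') (at p)"
  shows "((\<lambda>q. f q + g q) has_derivative jet_form (a + a') (b + b') (c + c')) (at p)"
proof -
  have "jet_form (a + a') (b + b') (c + c') = (\<lambda>h. jet_form a b c h + jet_form a' b' c' h)"
    by (auto simp: jet_form_apply algebra_simps)
  then show ?thesis
    using has_derivative_add[OF assms] by simp
qed

lemma has_derivative_jet_form_diff: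
  assumes "(f has_derivative jet_form a b c) (at p)" "(g has_derivative jet_form a' b' c') (at p)"
  shows "((\<lambda>q. f q - g q) has_derivative jet_form (a - a') (b - b') (c - c')) (at p)"
proof -
  have "jet_form (a - a') (b - b') (c - c') = (\<lambda>h. jet_form a b c h - jet_form a' b' c' h)"
    by (auto simp: jet_form_apply algebra_simps)
  then show ?thesis
    using has_derivative_diff[OF assms] by simp
qed

lemma has_derivative_jet_form_minus:
  assumes "(f has_derivative jet_form a b c) (at p)"
  shows "((\<lambda>q. - f q) has_derivative jet_form (- a) (- b) (- c)) (at p)"
proof -
  have "jet_form (- a) (- b) (- c) = (\<lambda>h. - jet_form a b c h)"
    by (auto simp: jet_form_apply algebra_simps)
  then show ?thesis
    using has_derivative_minus[OF assms] by simp
qed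

lemma has_derivative_jet_form_mult:
  assumes "(f has_derivative jet_form a b c) (at p)" "(g has_derivative jet_form a' b' c') (at p)"
  shows "((\<lambda>q. f q * g q) has_derivative
           jet_form (f p * a' + a * g p) (f p * b' + b * g p) (f p * c' + c * g p)) (at p)"
proof -
  have "jet_form (f p * a' + a * g p) (f p * b' + b * g p) (f p * c' + c * g p)
        = (\<lambda>h. f p * jet_form a' b' c' h + jet_form a b c h * g p)"
    by (auto simp: jet_form_apply algebra_simps)
  then show ?thesis
    using has_derivative_mult[OF assms] by simp
qed

lemma has_derivative_jet_form_divide:
  assumes "(f has_derivative jet_form a b c) (at p)" "(g has_derivative jet_form a' b' c') (at p)"
    and "g p \<noteq> 0"
  shows "((\<lambda>q. f q / g q) has_derivative
           jet_form ((a * g p - f p * a') / (g p)\<^sup>2) ((b * g p - f p * b') / (g p)\<^sup>2)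
             ((c * g p - f p * c') / (g p)\<^sup>2)) (at p)"
proof -
  have "jet_form ((a * g p - f p * a') / (g p)\<^sup>2) ((b * g p - f p * b') / (g p)\<^sup>2)
          ((c * g p - f p * c') / (g p)\<^sup>2)
        = (\<lambda>h. - (f p * (inverse (g p) * jet_form a' b' c' h * inverse (g p)))
                + jet_form a b c h * inverse (g p))"
    using assms(3) by (auto simp: jet_form_apply field_simps power2_eq_square)
  then show ?thesis
    using has_derivative_divide[OF assms] by (simp add: divide_inverse)
qed

lemma has_derivative_cong_open:
  assumes "open V" "p \<in> V" "\<forall>q\<in>V. f q = g q"
  shows "(f has_derivative D) (at p) \<longleftrightarrow> (g has_derivative D) (at p)"
proof
  assume "(f has_derivative D) (at p)"
  then show "(g has_derivative D) (at p)"
    by (rule has_derivative_transform_within_open[OF _ assms(1,2)]) (use assms(3) in auto)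
next
  assume "(g has_derivative D) (at p)"
  then show "(f has_derivative D) (at p)"
    by (rule has_derivative_transform_within_open[OF _ assms(1,2)]) (use assms(3) in auto)
qed

lemma pd_cong_open:
  assumes "open V" "p \<in> V" "\<forall>q\<in>V. f q = g q"
  shows "pd i f p = pd i g p"
proof -
  have "frechet_derivative f (at p) = frechet_derivative g (at p)"
    unfolding frechet_derivative_def using has_derivative_cong_open[OF assms] by simp
  then show ?thesis
    by (simp add: pd_def)
qed

lemma differentiable_cong_open:
  assumes "open V" "p \<in> V" "\<forall>q\<in>V. f q = g q"
  shows "f differentiable (at p) \<longleftrightarrow> g differentiable (at p)"
  unfolding differentiable_def using has_derivative_cong_open[OF assms] by simp

lemma pd_const: "pd i (\<lambda>_. k) p = 0"
  by (simp add: pd_def frechet_derivative_at[OF has_derivative_const, symmetric])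

lemma pd_add:
  assumes "f differentiable (at p)" "g differentiable (at p)"
  shows "pd i (\<lambda>q. f q + g q) p = pd i f p + pd i g p"
proof -
  have "((\<lambda>q. f q + g q) has_derivative
          (\<lambda>h. frechet_derivative f (at p) h + frechet_derivative g (at p) h)) (at p)"
    using assms by (intro has_derivative_add) (auto simp: frechet_derivative_works[symmetric])
  from frechet_derivative_at[OF this, symmetric] show ?thesis
    by (simp add: pd_def)
qed

lemma pd_mult:
  assumes "f differentiable (at p)" "g differentiable (at p)"
  shows "pd i (\<lambda>q. f q * g q) p = f p * pd i g p + pd i f p * g p"
proof -
  have "((\<lambda>q. f q * g q) has_derivative
          (\<lambda>h. f p * frechet_derivative g (at p) h + frechet_derivative f (at p) h * g p)) (at p)"
    using assms by (intro has_derivative_mult) (auto simp: frechet_derivative_works[symmetric])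
  from frechet_derivative_at[OF this, symmetric] show ?thesis
    by (simp add: pd_def)
qed

lemma pd_inverse:
  assumes "f differentiable (at p)" "f p \<noteq> 0"
  shows "pd i (\<lambda>q. 1 / f q) p = - pd i f p * (1 / f p) * (1 / f p)"
proof -
  have "((\<lambda>q. inverse (f q)) has_derivative
          (\<lambda>h. - (inverse (f p) * frechet_derivative f (at p) h * inverse (f p)))) (at p)"
    using assms by (intro Deriv.has_derivative_inverse) (auto simp: frechet_derivative_works[symmetric])
  from frechet_derivative_at[OF this, symmetric] show ?thesis
    by (simp add: pd_def divide_inverse)
qed

section \<open>Smooth functions\<close>

lemma iter_pd_cong_open:
  assumes "open V" "\<forall>q\<in>V. f q = g q"
  shows "\<forall>q\<in>V. iter_pd ds f q = iter_pd ds g q"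
  using assms(2) by (induction ds) (simp_all add: pd_cong_open[OF assms(1)])

lemma iter_pd_snoc: "iter_pd (ds @ [i]) f = iter_pd ds (pd i f)"
  by (induction ds) auto

definition smooth_upto :: "nat \<Rightarrow> jet set \<Rightarrow> (jet \<Rightarrow> real) \<Rightarrow> bool" where
  "smooth_upto n U f \<longleftrightarrow>
     (\<forall>ds. length ds \<le> n \<longrightarrow> (\<forall>i\<in>set ds. i < 3) \<longrightarrow> (\<forall>p\<in>U. iter_pd ds f differentiable (at p)))"

lemma smooth_on_iff_smooth_upto: "smooth_on U f \<longleftrightarrow> (\<forall>n. smooth_upto n U f)"
  unfolding smooth_on_def smooth_upto_def by auto

lemma smooth_upto_0: "smooth_upto 0 U f \<longleftrightarrow> (\<forall>p\<in>U. f differentiable (at p))"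
  unfolding smooth_upto_def by auto

lemma smooth_upto_Suc:
  "smooth_upto (Suc n) U f \<longleftrightarrow> (\<forall>p\<in>U. f differentiable (at p)) \<and> (\<forall>i<3. smooth_upto n U (pd i f))"
proof
  assume f: "smooth_upto (Suc n) U f"
  have "smooth_upto n U (pd i f)" if "i < 3" for i
    unfolding smooth_upto_def
  proof (intro allI impI)
    fix ds :: "nat list"
    assume "length ds \<le> n" "\<forall>i\<in>set ds. i < 3"
    then have "\<forall>p\<in>U. iter_pd (ds @ [i]) f differentiable (at p)"
      using f that unfolding smooth_upto_def by auto
    then show "\<forall>p\<in>U. iter_pd ds (pd i f) differentiable (at p)"
      by (simp add: iter_pd_snoc)
  qed
  moreover have "\<forall>p\<in>U. f differentiable (at p)"
    using f unfolding smooth_upto_def by (metis empty_iff iter_pd.simps(1) list.set(1) list.size(3) zero_le)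
  ultimately show "(\<forall>p\<in>U. f differentiable (at p)) \<and> (\<forall>i<3. smooth_upto n U (pd i f))"
    by blast
next
  assume f: "(\<forall>p\<in>U. f differentiable (at p)) \<and> (\<forall>i<3. smooth_upto n U (pd i f))"
  show "smooth_upto (Suc n) U f"
    unfolding smooth_upto_def
  proof (intro allI impI)
    fix ds :: "nat list"
    assume "length ds \<le> Suc n" "\<forall>i\<in>set ds. i < 3"
    then show "\<forall>p\<in>U. iter_pd ds f differentiable (at p)"
      using f by (cases ds rule: rev_cases) (auto simp: smooth_upto_def iter_pd_snoc)
  qed
qed

lemma smooth_upto_Suc_imp: "smooth_upto (Suc n) U f \<Longrightarrow> smooth_upto n U f"
  unfolding smooth_upto_def by auto

lemma smooth_upto_cong_open:
  assumes "open U" "\<forall>q\<in>U. f q = g q" "smooth_upto n U f"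
  shows "smooth_upto n U g"
  unfolding smooth_upto_def
proof (intro allI impI ballI)
  fix ds :: "nat list" and p
  assume "length ds \<le> n" "\<forall>i\<in>set ds. i < 3" "p \<in> U"
  then have "iter_pd ds f differentiable (at p)"
    using assms(3) unfolding smooth_upto_def by blast
  then show "iter_pd ds g differentiable (at p)"
    using differentiable_cong_open[OF assms(1) \<open>p \<in> U\<close>] iter_pd_cong_open[OF assms(1,2)] by blast
qed

lemma smooth_upto_const: "smooth_upto n U (\<lambda>_. k)"
  by (induction n arbitrary: k) (simp_all add: smooth_upto_0 smooth_upto_Suc pd_const[abs_def])

lemma smooth_upto_affine:
  assumes "\<And>p. (f has_derivative jet_form a b c) (at p)"
  shows "smooth_upto n U f"
proof -
  have f: "\<forall>p\<in>U. f differentiable (at p)"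
    unfolding differentiable_def using assms by blast
  show ?thesis
  proof (cases n)
    case 0
    then show ?thesis
      using f by (simp add: smooth_upto_0)
  next
    case (Suc m)
    have "pd i f = (\<lambda>_. if i = 0 then a else if i = 1 then b else c)" if i: "i < 3" for i
    proof -
      consider "i = 0" | "i = 1" | "i = 2"
        using i by linarith
      then show ?thesis
        using pd_eq_jet_form[OF assms] by cases auto
    qed
    then show ?thesis
      using f Suc smooth_upto_const by (auto simp: smooth_upto_Suc)
  qed
qed

lemma smooth_upto_add:
  assumes "open U"
  shows "smooth_upto n U f \<Longrightarrow> smooth_upto n U g \<Longrightarrow> smooth_upto n U (\<lambda>q. f q + g q)"
proof (induction n arbitrary: f g)
  case 0
  then show ?case by (simp add: smooth_upto_0)
next
  case (Suc n)
  have d: "\<forall>p\<in>U. f differentiable (at p)" "\<forall>p\<in>U. g differentiable (at p)"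
    using Suc.prems by (auto simp: smooth_upto_Suc)
  have "smooth_upto n U (pd i (\<lambda>q. f q + g q))" if "i < 3" for i
  proof (rule smooth_upto_cong_open[OF assms])
    show "\<forall>q\<in>U. pd i f q + pd i g q = pd i (\<lambda>q. f q + g q) q"
      using d by (simp add: pd_add)
    show "smooth_upto n U (\<lambda>q. pd i f q + pd i g q)"
      using Suc that by (simp add: smooth_upto_Suc)
  qed
  then show ?case
    using d by (simp add: smooth_upto_Suc)
qed

lemma smooth_upto_mult:
  assumes "open U"
  shows "smooth_upto n U f \<Longrightarrow> smooth_upto n U g \<Longrightarrow> smooth_upto n U (\<lambda>q. f q * g q)"
proof (induction n arbitrary: f g)
  case 0
  then show ?case by (simp add: smooth_upto_0)
next
  case (Suc n)
  have d: "\<forall>p\<in>U. f differentiable (at p)" "\<forall>p\<in>U. g differentiable (at p)"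
    using Suc.prems by (auto simp: smooth_upto_Suc)
  have "smooth_upto n U (pd i (\<lambda>q. f q * g q))" if "i < 3" for i
  proof (rule smooth_upto_cong_open[OF assms])
    show "\<forall>q\<in>U. f q * pd i g q + pd i f q * g q = pd i (\<lambda>q. f q * g q) q"
      using d by (simp add: pd_mult)
    have "smooth_upto n U f" "smooth_upto n U g" "smooth_upto n U (pd i f)" "smooth_upto n U (pd i g)"
      using Suc.prems that smooth_upto_Suc_imp by (auto simp: smooth_upto_Suc)
    then show "smooth_upto n U (\<lambda>q. f q * pd i g q + pd i f q * g q)"
      by (intro smooth_upto_add[OF assms] Suc.IH)
  qed
  then show ?case
    using d by (simp add: smooth_upto_Suc)
qed

lemma smooth_upto_inverse:
  assumes "open U"
  shows "smooth_upto n U f \<Longrightarrow> \<forall>q\<in>U. f q \<noteq> 0 \<Longrightarrow> smooth_upto n U (\<lambda>q. 1 / f q)"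
proof (induction n arbitrary: f)
  case 0
  then show ?case by (simp add: smooth_upto_0)
next
  case (Suc n)
  have d: "\<forall>p\<in>U. f differentiable (at p)"
    using Suc.prems by (auto simp: smooth_upto_Suc)
  have "smooth_upto n U (pd i (\<lambda>q. 1 / f q))" if "i < 3" for i
  proof (rule smooth_upto_cong_open[OF assms])
    show "\<forall>q\<in>U. - pd i f q * (1 / f q) * (1 / f q) = pd i (\<lambda>q. 1 / f q) q"
      using d Suc.prems(2) by (simp add: pd_inverse)
    have "smooth_upto n U (\<lambda>q. 1 / f q)" "smooth_upto n U (pd i f)"
      using Suc smooth_upto_Suc_imp that by (auto simp: smooth_upto_Suc)
    then show "smooth_upto n U (\<lambda>q. - pd i f q * (1 / f q) * (1 / f q))"
      using smooth_upto_mult[OF assms, of n "\<lambda>q. - pd i f q * (1 / f q)" "\<lambda>q. 1 / f q"]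
        smooth_upto_mult[OF assms, of n "\<lambda>q. - pd i f q" "\<lambda>q. 1 / f q"]
        smooth_upto_mult[OF assms, of n "\<lambda>_. - 1" "pd i f"] smooth_upto_const[of n U "- 1"]
      by simp
  qed
  then show ?case
    using d Suc.prems(2) by (simp add: smooth_upto_Suc)
qed

lemma smooth_on_const [simp]: "smooth_on U (\<lambda>_. k)"
  by (simp add: smooth_on_iff_smooth_upto smooth_upto_const)

lemma smooth_on_ux: "smooth_on U (\<lambda>q. snd (snd q))"
  by (simp add: smooth_on_iff_smooth_upto smooth_upto_affine[OF has_derivative_jet_form_ux])

lemma smooth_on_add: "open U \<Longrightarrow> smooth_on U f \<Longrightarrow> smooth_on U g \<Longrightarrow> smooth_on U (\<lambda>q. f q + g q)"
  by (simp add: smooth_on_iff_smooth_upto smooth_upto_add)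

lemma smooth_on_mult: "open U \<Longrightarrow> smooth_on U f \<Longrightarrow> smooth_on U g \<Longrightarrow> smooth_on U (\<lambda>q. f q * g q)"
  by (simp add: smooth_on_iff_smooth_upto smooth_upto_mult)

lemma smooth_on_inverse:
  "open U \<Longrightarrow> smooth_on U f \<Longrightarrow> \<forall>q\<in>U. f q \<noteq> 0 \<Longrightarrow> smooth_on U (\<lambda>q. 1 / f q)"
  by (simp add: smooth_on_iff_smooth_upto smooth_upto_inverse)

lemma smooth_on_minus: "open U \<Longrightarrow> smooth_on U f \<Longrightarrow> smooth_on U (\<lambda>q. - f q)"
  using smooth_on_mult[of U "\<lambda>_. -1" f] by simp

lemma smooth_on_diff: "open U \<Longrightarrow> smooth_on U f \<Longrightarrow> smooth_on U g \<Longrightarrow> smooth_on U (\<lambda>q. f q - g q)"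
  using smooth_on_add[of U f "\<lambda>q. - g q"] smooth_on_minus by simp

lemma smooth_on_divide:
  "open U \<Longrightarrow> smooth_on U f \<Longrightarrow> smooth_on U g \<Longrightarrow> \<forall>q\<in>U. g q \<noteq> 0 \<Longrightarrow> smooth_on U (\<lambda>q. f q / g q)"
  using smooth_on_mult[of U f "\<lambda>q. 1 / g q"] smooth_on_inverse by simp

lemma smooth_on_subset: "smooth_on U f \<Longrightarrow> V \<subseteq> U \<Longrightarrow> smooth_on V f"
  unfolding smooth_on_def by blast

lemma smooth_on_pd: "smooth_on U f \<Longrightarrow> i < 3 \<Longrightarrow> smooth_on U (pd i f)"
  unfolding smooth_on_iff_smooth_upto by (metis smooth_upto_Suc)

lemma smooth_on_imp_differentiable: "smooth_on U f \<Longrightarrow> p \<in> U \<Longrightarrow> f differentiable (at p)"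
  unfolding smooth_on_iff_smooth_upto by (metis smooth_upto_0)

lemma smooth_on_imp_continuous_on: "smooth_on U f \<Longrightarrow> continuous_on U f"
  by (meson continuous_at_imp_continuous_on differentiable_imp_continuous_within
      smooth_on_imp_differentiable)

section \<open>The Poincare lemma on balls\<close>

definition closed_form_on :: "jet set \<Rightarrow> (jet \<Rightarrow> real) \<Rightarrow> (jet \<Rightarrow> real) \<Rightarrow> (jet \<Rightarrow> real) \<Rightarrow> bool" where
  "closed_form_on U P Q R \<longleftrightarrow>
     (\<forall>q\<in>U. pd 1 P q = pd 0 Q q \<and> pd 2 P q = pd 0 R q \<and> pd 2 Q q = pd 1 R q)"

definition radial :: "jet \<Rightarrow> jet \<Rightarrow> real \<Rightarrow> jet" where
  "radial p y t = p + t *\<^sub>R (y - p)"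

lemma radial_in_ball:
  assumes "y \<in> ball p r" "t \<in> {0..1}"
  shows "radial p y t \<in> ball p r"
proof -
  have "dist p (radial p y t) = \<bar>t\<bar> * norm (y - p)"
    by (simp add: radial_def dist_norm)
  also have "\<dots> \<le> norm (y - p)"
    using assms(2) by (auto intro: mult_left_le_one_le)
  also have "\<dots> < r"
    using assms(1) by (simp add: dist_norm norm_minus_commute)
  finally show ?thesis
    by simp
qed

lemma continuous_on_radial:
  assumes "continuous_on U h" "ball p r \<subseteq> U"
  shows "continuous_on (ball p r \<times> {0..1}) (\<lambda>z. h (radial p (fst z) (snd z)))"
proof (rule continuous_on_compose2[OF assms(1)])
  show "continuous_on (ball p r \<times> {0..1}) (\<lambda>z. radial p (fst z) (snd z))"
    unfolding radial_def by (intro continuous_intros)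
  show "(\<lambda>z. radial p (fst z) (snd z)) ` (ball p r \<times> {0..1}) \<subseteq> U"
    using radial_in_ball assms(2) by fastforce
qed

lemma has_derivative_radial_point:
  assumes "(f has_derivative jet_form a b c) (at (radial p y t))"
  shows "((\<lambda>y. f (radial p y t)) has_derivative jet_form (t * a) (t * b) (t * c)) (at y)"
proof -
  have r: "((\<lambda>y. radial p y t) has_derivative (\<lambda>h. t *\<^sub>R h)) (at y)"
    unfolding radial_def by (auto intro!: derivative_eq_intros)
  have "(\<lambda>h. jet_form a b c (t *\<^sub>R h)) = jet_form (t * a) (t * b) (t * c)"
    by (auto simp: jet_form_apply algebra_simps)
  then show ?thesis
    using has_derivative_compose[OF r assms] by simp
qed

lemma has_vector_derivative_radial_time:
  assumes "(f has_derivative jet_form a b c) (at (radial p y t))"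
  shows "((\<lambda>s. f (radial p y s)) has_vector_derivative jet_form a b c (y - p)) (at t within S)"
proof -
  have r: "((\<lambda>s. radial p y s) has_derivative (\<lambda>s. s *\<^sub>R (y - p))) (at t within S)"
    unfolding radial_def by (auto intro!: derivative_eq_intros)
  have "(\<lambda>s. jet_form a b c (s *\<^sub>R (y - p))) = (\<lambda>s. s *\<^sub>R jet_form a b c (y - p))"
    by (auto simp: jet_form_apply algebra_simps)
  then show ?thesis
    using has_derivative_compose[OF r assms] by (simp add: has_vector_derivative_def)
qed

text \<open>The integrand of the radial homotopy formula is
  \<open>t \<mapsto> \<omega>(radial p y t)(y - p)\<close>; its derivative in \<open>y\<close> has the components below.\<close>

definition radial_coeff ::
  "nat \<Rightarrow> (jet \<Rightarrow> real) \<Rightarrow> (jet \<Rightarrow> real) \<Rightarrow> (jet \<Rightarrow> real) \<Rightarrow> (jet \<Rightarrow> real) \<Rightarrow> jet \<Rightarrow> jet \<Rightarrow> real \<Rightarrow> real"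
  where
  "radial_coeff i P Q R S p y t =
     t * jet_form (pd i P (radial p y t)) (pd i Q (radial p y t)) (pd i R (radial p y t)) (y - p)
     + S (radial p y t)"

lemma has_derivative_radial_integrand:
  assumes "P differentiable (at (radial p y t))" "Q differentiable (at (radial p y t))"
    and "R differentiable (at (radial p y t))"
  shows "((\<lambda>y. jet_form (P (radial p y t)) (Q (radial p y t)) (R (radial p y t)) (y - p))
           has_derivative jet_form (radial_coeff 0 P Q R P p y t) (radial_coeff 1 P Q R Q p y t)
             (radial_coeff 2 P Q R R p y t)) (at y)"
proof -
  have dx: "((\<lambda>y. fst (y - p)) has_derivative jet_form 1 0 0) (at y)"
    using has_derivative_jet_form_diff[OF has_derivative_jet_form_x has_derivative_jet_form_const] by simp
  have du: "((\<lambda>y. fst (snd (y - p))) has_derivative jet_form 0 1 0) (at y)"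
    using has_derivative_jet_form_diff[OF has_derivative_jet_form_u has_derivative_jet_form_const] by simp
  have dux: "((\<lambda>y. snd (snd (y - p))) has_derivative jet_form 0 0 1) (at y)"
    using has_derivative_jet_form_diff[OF has_derivative_jet_form_ux has_derivative_jet_form_const] by simp
  note dP = has_derivative_radial_point[OF has_derivative_pd[OF assms(1)]]
  note dQ = has_derivative_radial_point[OF has_derivative_pd[OF assms(2)]]
  note dR = has_derivative_radial_point[OF has_derivative_pd[OF assms(3)]]
  show ?thesis
    using has_derivative_jet_form_add[OF has_derivative_jet_form_add[OF
        has_derivative_jet_form_mult[OF dP dx] has_derivative_jet_form_mult[OF dQ du]]
        has_derivative_jet_form_mult[OF dR dux]]
    by (simp add: radial_coeff_def jet_form_apply algebra_simps)
qed

lemma has_integral_radial: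
  assumes "\<forall>t\<in>{0..1}. S differentiable (at (radial p y t)) \<and>
             h t = t * jet_form (pd 0 S (radial p y t)) (pd 1 S (radial p y t)) (pd 2 S (radial p y t)) (y - p)
                   + S (radial p y t)"
  shows "(h has_integral S y) {0..1}"
proof -
  have "((\<lambda>t. t * S (radial p y t)) has_vector_derivative h t) (at t within {0..1})"
    if t: "t \<in> {0..1}" for t
  proof -
    have "((\<lambda>s. S (radial p y s)) has_vector_derivative
            jet_form (pd 0 S (radial p y t)) (pd 1 S (radial p y t)) (pd 2 S (radial p y t)) (y - p))
            (at t within {0..1})"
      using has_vector_derivative_radial_time[OF has_derivative_pd] assms t by blast
    from has_vector_derivative_mult[OF has_vector_derivative_id this] show ?thesis
      using assms t by (simp add: algebra_simps)
  qed
  then have "(h has_integral (1 * S (radial p y 1) - 0 * S (radial p y 0))) {0..1}"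
    by (intro fundamental_theorem_of_calculus) auto
  then show ?thesis
    by (simp add: radial_def)
qed

text \<open>Closedness of the form turns each component of the \<open>y\<close>-derivative of the
  integrand into a total \<open>t\<close>-derivative.\<close>

lemma has_integral_radial_coeff:
  assumes "smooth_on U P" "smooth_on U Q" "smooth_on U R" "closed_form_on U P Q R"
    and "\<forall>t\<in>{0..1}. radial p y t \<in> U"
  shows "(radial_coeff 0 P Q R P p y has_integral P y) {0..1}"
    and "(radial_coeff 1 P Q R Q p y has_integral Q y) {0..1}"
    and "(radial_coeff 2 P Q R R p y has_integral R y) {0..1}"
  using assms
  by (auto intro!: has_integral_radial smooth_on_imp_differentiable
      simp: closed_form_on_def radial_coeff_def)

lemma continuous_on_radial_coeff:
  assumes "ball p r \<subseteq> U" "smooth_on U P" "smooth_on U Q" "smooth_on U R" "smooth_on U S" "i < 3"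
  shows "continuous_on (ball p r \<times> {0..1}) (\<lambda>z. radial_coeff i P Q R S p (fst z) (snd z))"
proof -
  have "continuous_on (ball p r \<times> {0..1}) (\<lambda>z. h (radial p (fst z) (snd z)))"
    if "smooth_on U h" for h
    using continuous_on_radial[OF smooth_on_imp_continuous_on[OF that] assms(1)] .
  note radial_comp = this[OF smooth_on_pd[OF assms(2,6)]] this[OF smooth_on_pd[OF assms(3,6)]]
    this[OF smooth_on_pd[OF assms(4,6)]] this[OF assms(5)]
  show ?thesis
    unfolding radial_coeff_def jet_form_apply by (intro continuous_intros radial_comp)
qed

definition radial_coeff_blinfun ::
  "(jet \<Rightarrow> real) \<Rightarrow> (jet \<Rightarrow> real) \<Rightarrow> (jet \<Rightarrow> real) \<Rightarrow> jet \<Rightarrow> jet \<Rightarrow> real \<Rightarrow> jet \<Rightarrow>\<^sub>L real"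
  where
  "radial_coeff_blinfun P Q R p y t = Blinfun (jet_form (radial_coeff 0 P Q R P p y t)
     (radial_coeff 1 P Q R Q p y t) (radial_coeff 2 P Q R R p y t))"

lemma radial_coeff_blinfun_apply:
  "blinfun_apply (radial_coeff_blinfun P Q R p y t)
     = jet_form (radial_coeff 0 P Q R P p y t) (radial_coeff 1 P Q R Q p y t) (radial_coeff 2 P Q R R p y t)"
  unfolding radial_coeff_blinfun_def by (rule bounded_linear_Blinfun_apply[OF bounded_linear_jet_form])

lemma continuous_on_radial_coeff_blinfun:
  assumes "ball p r \<subseteq> U" "smooth_on U P" "smooth_on U Q" "smooth_on U R"
  shows "continuous_on (ball p r \<times> cbox 0 1) (\<lambda>(y, t). radial_coeff_blinfun P Q R p y t)"
proof (rule continuous_on_blinfun_componentwise)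
  fix b :: jet
  assume "b \<in> Basis"
  then have "b = (1, 0, 0) \<or> b = (0, 1, 0) \<or> b = (0, 0, 1)"
    by (auto simp: Basis_prod_def zero_prod_def)
  then show "continuous_on (ball p r \<times> cbox 0 1)
               (\<lambda>z. blinfun_apply (case z of (y, t) \<Rightarrow> radial_coeff_blinfun P Q R p y t) b)"
    using continuous_on_radial_coeff[OF assms assms(2)] continuous_on_radial_coeff[OF assms assms(3)]
      continuous_on_radial_coeff[OF assms assms(4)]
    by (auto simp: radial_coeff_blinfun_apply jet_form_apply split_beta)
qed

lemma integral_radial_coeff_blinfun:
  assumes U: "ball p r \<subseteq> U" and sm: "smooth_on U P" "smooth_on U Q" "smooth_on U R"
    and closed: "closed_form_on U P Q R" and y: "y \<in> ball p r"
  shows "radial_coeff_blinfun P Q R p y integrable_on cbox 0 1"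
    and "blinfun_apply (integral (cbox 0 1) (radial_coeff_blinfun P Q R p y))
           = (\<lambda>(dx, du, dux). P y * dx + Q y * du + R y * dux)"
proof -
  have radial_U: "\<forall>t\<in>{0..1}. radial p y t \<in> U"
    using radial_in_ball[OF y] U by blast
  have slice: "(\<lambda>t. (y, t)) ` {0..1::real} \<subseteq> ball p r \<times> cbox 0 1"
    using y by (auto simp: box_real)
  have "continuous_on {0..1} (\<lambda>t. (\<lambda>(y, t). radial_coeff_blinfun P Q R p y t) (y, t))"
    by (rule continuous_on_compose2[OF continuous_on_radial_coeff_blinfun[OF U sm] _ slice])
      (auto intro!: continuous_intros)
  then show int: "radial_coeff_blinfun P Q R p y integrable_on cbox 0 1"
    by (simp add: integrable_continuous_interval)
  show "blinfun_apply (integral (cbox 0 1) (radial_coeff_blinfun P Q R p y))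
          = (\<lambda>(dx, du, dux). P y * dx + Q y * du + R y * dux)"
  proof
    fix h
    have "blinfun_apply (integral (cbox 0 1) (radial_coeff_blinfun P Q R p y)) h
            = integral {0..1} (\<lambda>t. blinfun_apply (radial_coeff_blinfun P Q R p y t) h)"
      using blinfun_apply_integral[OF int] by simp
    also have "\<dots> = fst h * P y + fst (snd h) * Q y + snd (snd h) * R y"
      using has_integral_radial_coeff[OF sm closed radial_U]
      by (intro integral_unique) (auto simp: radial_coeff_blinfun_apply jet_form_apply
          intro!: has_integral_add has_integral_mult_right)
    finally show "blinfun_apply (integral (cbox 0 1) (radial_coeff_blinfun P Q R p y)) h
                    = (\<lambda>(dx, du, dux). P y * dx + Q y * du + R y * dux) h"
      by (simp add: split_beta mult.commute)
  qed
qed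

lemma poincare_lemma_ball:
  assumes U: "ball p r \<subseteq> U" and sm: "smooth_on U P" "smooth_on U Q" "smooth_on U R"
    and closed: "closed_form_on U P Q R"
  shows "\<exists>I. solves_sys (ball p r) I P Q R"
proof -
  define F where "F y t = jet_form (P (radial p y t)) (Q (radial p y t)) (R (radial p y t)) (y - p)" for y t
  have radial_U: "radial p y t \<in> U" if "y \<in> ball p r" "t \<in> {0..1}" for y t
    using radial_in_ball that U by blast
  have F_deriv: "((\<lambda>y. F y t) has_derivative blinfun_apply (radial_coeff_blinfun P Q R p y t))
                   (at y within ball p r)"
    if "y \<in> ball p r" "t \<in> cbox 0 1" for y t
    using has_derivative_radial_integrand[of P p y t Q R] radial_U[of y t] that sm
    by (auto simp: F_def radial_coeff_blinfun_apply smooth_on_imp_differentiable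
        intro: has_derivative_at_withinI)
  have F_int: "F y integrable_on cbox 0 1" if y: "y \<in> ball p r" for y
  proof -
    have "continuous_on {0..1} (\<lambda>t. h (radial p y t))" if "smooth_on U h" for h
    proof (rule continuous_on_compose2[OF smooth_on_imp_continuous_on[OF that]])
      show "continuous_on {0..1} (radial p y)"
        unfolding radial_def by (intro continuous_intros)
      show "radial p y ` {0..1} \<subseteq> U"
        using radial_U[OF y] by blast
    qed
    then have "continuous_on {0..1} (F y)"
      unfolding F_def jet_form_apply using sm by (intro continuous_intros)
    then show ?thesis
      by (simp add: integrable_continuous_interval)
  qed
  have "((\<lambda>y. integral (cbox 0 1) (F y)) has_derivative
          (\<lambda>(dx, du, dux). P y * dx + Q y * du + R y * dux)) (at y)"
    if y: "y \<in> ball p r" for y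
    using leibniz_rule[OF F_deriv F_int continuous_on_radial_coeff_blinfun[OF U sm] y convex_ball]
      integral_radial_coeff_blinfun(2)[OF U sm closed y] at_within_open[OF y open_ball]
    by simp
  then show ?thesis
    unfolding solves_sys_def by blast
qed

lemma exists_common_potentials:
  assumes "open U"
    and "smooth_on U P1" "smooth_on U Q1" "smooth_on U R1" "closed_form_on U P1 Q1 R1"
    and "smooth_on U P2" "smooth_on U Q2" "smooth_on U R2" "closed_form_on U P2 Q2 R2"
  shows "\<forall>p\<in>U. \<exists>V. open V \<and> p \<in> V \<and> V \<subseteq> U \<and>
           (\<exists>I1 I2. solves_sys V I1 P1 Q1 R1 \<and> solves_sys V I2 P2 Q2 R2)"
proof
  fix p
  assume "p \<in> U"
  then obtain r where "r > 0" "ball p r \<subseteq> U"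
    using assms(1) open_contains_ball by blast
  with poincare_lemma_ball[of p r U] assms show "\<exists>V. open V \<and> p \<in> V \<and> V \<subseteq> U \<and>
           (\<exists>I1 I2. solves_sys V I1 P1 Q1 R1 \<and> solves_sys V I2 P2 Q2 R2)"
    by (metis centre_in_ball open_ball)
qed

lemma pd_eq_if_solves_sys:
  assumes "solves_sys V I P Q R" "q \<in> V"
  shows "pd 0 I q = P q" "pd 1 I q = Q q" "pd 2 I q = R q"
proof -
  have "(\<lambda>(dx, du, dux). P q * dx + Q q * du + R q * dux) = jet_form (P q) (Q q) (R q)"
    by (auto simp: jet_form_apply algebra_simps)
  then have "(I has_derivative jet_form (P q) (Q q) (R q)) (at q)"
    using assms unfolding solves_sys_def by metis
  then show "pd 0 I q = P q" "pd 1 I q = Q q" "pd 2 I q = R q"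
    by (fact pd_eq_jet_form)+
qed

lemma smooth_on_if_solves_sys:
  assumes "open V" "solves_sys V I P Q R" "smooth_on V P" "smooth_on V Q" "smooth_on V R"
  shows "smooth_on V I"
proof -
  have I: "\<forall>q\<in>V. I differentiable (at q)"
    using assms(2) unfolding solves_sys_def differentiable_def by blast
  have "smooth_upto m V (pd i I)" if "i < 3" for i m
  proof -
    consider "i = 0" | "i = 1" | "i = 2"
      using \<open>i < 3\<close> by linarith
    then show ?thesis
      using assms pd_eq_if_solves_sys[OF assms(2)]
      by cases (auto simp: smooth_on_iff_smooth_upto intro: smooth_upto_cong_open)
  qed
  then have "smooth_upto n V I" for n
    using I by (cases n) (simp_all add: smooth_upto_0 smooth_upto_Suc)
  then show ?thesis
    by (simp add: smooth_on_iff_smooth_upto)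
qed

section \<open>First integrals by quadratures\<close>

lemma Avf_apply: "Avf \<phi> h p = pd 0 h p + snd (snd p) * pd 1 h p + \<phi> p * pd 2 h p"
  by (cases p) (simp add: Avf_def vf_def)

lemma Xvf_apply: "Xvf lam h p = pd 1 h p + lam p * pd 2 h p"
  by (simp add: Xvf_def vf_def)

lemma prol_du: "prol \<phi> (\<lambda>_. 0) (\<lambda>_. 1) lam h p = Xvf lam h p"
  by (simp add: prol_def vf_def prol_coeff_def Avf_apply Xvf_apply pd_const)

lemma gen_sym_du_condition:
  assumes "gen_sym U \<phi> (\<lambda>_. 0) (\<lambda>_. 1) lam" "q \<in> U"
  shows "Xvf lam \<phi> q - Avf \<phi> lam q = lam q * lam q"
proof -
  define ux :: "jet \<Rightarrow> real" where "ux p = snd (snd p)" for p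
  have pd_ux: "pd 0 ux p = 0" "pd 1 ux p = 0" "pd 2 ux p = 1" for p
    unfolding ux_def[abs_def] using pd_eq_jet_form[OF has_derivative_jet_form_ux] by auto
  have "Avf \<phi> ux = \<phi>" "prol \<phi> (\<lambda>_. 0) (\<lambda>_. 1) lam ux = lam"
    by (simp_all add: fun_eq_iff Avf_apply prol_du Xvf_apply pd_ux[simplified])
  moreover have "prol \<phi> (\<lambda>_. 0) (\<lambda>_. 1) lam (Avf \<phi> ux) q - Avf \<phi> (prol \<phi> (\<lambda>_. 0) (\<lambda>_. 1) lam ux) q
        = lam q * prol \<phi> (\<lambda>_. 0) (\<lambda>_. 1) lam ux q - (Avf \<phi> (\<lambda>_. 0) q + lam q * 0) * Avf \<phi> ux q"
    using assms smooth_on_ux unfolding gen_sym_def ux_def[abs_def] by blast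
  ultimately show ?thesis
    by (simp add: prol_du Avf_apply pd_const)
qed

lemma smooth_on_quadrature_coeffs:
  assumes "open U" "smooth_on U \<phi>" "smooth_on U la" "smooth_on U D" "\<forall>q\<in>U. D q \<noteq> 0"
  shows "smooth_on U (\<lambda>q. (la q * snd (snd q) - \<phi> q) / D q)"
    and "smooth_on U (\<lambda>q. - la q / D q)"
    and "smooth_on U (\<lambda>q. 1 / D q)"
  using assms
  by (intro smooth_on_divide smooth_on_diff smooth_on_mult smooth_on_minus smooth_on_ux smooth_on_const;
      simp)+

lemma first_integral_assoc_if_solves_sys:
  assumes "open V" "V \<subseteq> U" "smooth_on U \<phi>" "smooth_on U la" "smooth_on U D" "\<forall>q\<in>U. D q \<noteq> 0"
    and sol: "solves_sys V I (\<lambda>q. (la q * snd (snd q) - \<phi> q) / D q) (\<lambda>q. - la q / D q) (\<lambda>q. 1 / D q)"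
  shows "first_integral_assoc V \<phi> (\<lambda>_. 0) (\<lambda>_. 1) la I"
proof -
  have "smooth_on V I"
    using smooth_on_quadrature_coeffs[OF assms(1) smooth_on_subset[OF assms(3,2)]
        smooth_on_subset[OF assms(4,2)] smooth_on_subset[OF assms(5,2)]] assms(2,6)
    by (intro smooth_on_if_solves_sys[OF assms(1) sol]) auto
  moreover have "Avf \<phi> I q = 0" "prol \<phi> (\<lambda>_. 0) (\<lambda>_. 1) la I q = 0" if "q \<in> V" for q
    using pd_eq_if_solves_sys[OF sol that]
    by (simp_all add: Avf_apply prol_du Xvf_apply add_divide_distrib [symmetric] diff_divide_distrib)
  ultimately show ?thesis
    unfolding first_integral_assoc_def by blast
qed

lemma func_indep_if_solves_sys:
  assumes sol1: "solves_sys V I1 P1 (\<lambda>q. - la q / D1 q) (\<lambda>q. 1 / D1 q)"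
    and sol2: "solves_sys V I2 P2 (\<lambda>q. - lb q / D2 q) (\<lambda>q. 1 / D2 q)"
    and nz: "\<forall>q\<in>V. la q \<noteq> lb q \<and> D1 q \<noteq> 0 \<and> D2 q \<noteq> 0"
  shows "func_indep V I1 I2"
  unfolding func_indep_def
proof (intro ballI allI impI)
  fix q a b
  assume q: "q \<in> V" and dep: "\<forall>i<3. a * pd i I1 q + b * pd i I2 q = 0"
  note pd1 = pd_eq_if_solves_sys[OF sol1 q] and pd2 = pd_eq_if_solves_sys[OF sol2 q]
  define x y where "x = a / D1 q" and "y = b / D2 q"
  have "a * pd 1 I1 q + b * pd 1 I2 q = 0" "a * pd 2 I1 q + b * pd 2 I2 q = 0"
    using dep by simp_all
  then have "la q * x + lb q * y = 0" "x + y = 0"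
    unfolding pd1 pd2 x_def y_def by (simp_all add: field_simps)
  then have "(la q - lb q) * x = 0" "y = - x"
    by algebra+
  then show "a = 0 \<and> b = 0"
    using nz q by (simp add: x_def y_def)
qed

lemma first_integrals_by_quadratures:
  fixes U :: "jet set" and \<phi> la lb D1 D2 :: "jet \<Rightarrow> real"
  defines "P1 \<equiv> \<lambda>q. (la q * snd (snd q) - \<phi> q) / D1 q"
    and "P2 \<equiv> \<lambda>q. (lb q * snd (snd q) - \<phi> q) / D2 q"
  assumes U: "open U" and sm: "smooth_on U \<phi>" "smooth_on U la" "smooth_on U lb"
    "smooth_on U D1" "smooth_on U D2"
    and nz: "\<forall>q\<in>U. la q \<noteq> lb q \<and> D1 q \<noteq> 0 \<and> D2 q \<noteq> 0"
    and closed: "closed_form_on U P1 (\<lambda>q. - la q / D1 q) (\<lambda>q. 1 / D1 q)"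
      "closed_form_on U P2 (\<lambda>q. - lb q / D2 q) (\<lambda>q. 1 / D2 q)"
  shows "(\<forall>p\<in>U. \<exists>V. open V \<and> p \<in> V \<and> V \<subseteq> U \<and> (\<exists>I1 I2.
            solves_sys V I1 P1 (\<lambda>q. - la q / D1 q) (\<lambda>q. 1 / D1 q) \<and>
            solves_sys V I2 P2 (\<lambda>q. - lb q / D2 q) (\<lambda>q. 1 / D2 q)))
       \<and> (\<forall>V I1 I2. open V \<and> V \<subseteq> U \<and>
            solves_sys V I1 P1 (\<lambda>q. - la q / D1 q) (\<lambda>q. 1 / D1 q) \<and>
            solves_sys V I2 P2 (\<lambda>q. - lb q / D2 q) (\<lambda>q. 1 / D2 q)
          \<longrightarrow> first_integral_assoc V \<phi> (\<lambda>_. 0) (\<lambda>_. 1) la I1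
            \<and> first_integral_assoc V \<phi> (\<lambda>_. 0) (\<lambda>_. 1) lb I2
            \<and> func_indep V I1 I2)"
proof (intro conjI allI impI)
  show "\<forall>p\<in>U. \<exists>V. open V \<and> p \<in> V \<and> V \<subseteq> U \<and> (\<exists>I1 I2.
          solves_sys V I1 P1 (\<lambda>q. - la q / D1 q) (\<lambda>q. 1 / D1 q) \<and>
          solves_sys V I2 P2 (\<lambda>q. - lb q / D2 q) (\<lambda>q. 1 / D2 q))"
    using nz unfolding P1_def P2_def
    by (intro exists_common_potentials[OF U smooth_on_quadrature_coeffs[OF U sm(1,2,4)] closed(1)[unfolded P1_def]
        smooth_on_quadrature_coeffs[OF U sm(1,3,5)] closed(2)[unfolded P2_def]]) auto
next
  fix V I1 I2
  assume "open V \<and> V \<subseteq> U \<and> solves_sys V I1 P1 (\<lambda>q. - la q / D1 q) (\<lambda>q. 1 / D1 q) \<and>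
            solves_sys V I2 P2 (\<lambda>q. - lb q / D2 q) (\<lambda>q. 1 / D2 q)"
  then have V: "open V" "V \<subseteq> U" and sol: "solves_sys V I1 P1 (\<lambda>q. - la q / D1 q) (\<lambda>q. 1 / D1 q)"
    "solves_sys V I2 P2 (\<lambda>q. - lb q / D2 q) (\<lambda>q. 1 / D2 q)"
    by auto
  show "first_integral_assoc V \<phi> (\<lambda>_. 0) (\<lambda>_. 1) la I1" "first_integral_assoc V \<phi> (\<lambda>_. 0) (\<lambda>_. 1) lb I2"
    using nz sol unfolding P1_def P2_def
    by (auto intro: first_integral_assoc_if_solves_sys[OF V sm(1,2,4)]
        first_integral_assoc_if_solves_sys[OF V sm(1,3,5)])
  show "func_indep V I1 I2"
    using func_indep_if_solves_sys[OF sol] nz V(2) by blast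
qed

lemma closed_form_on_quadrature:
  fixes \<phi> la lb f g :: "jet \<Rightarrow> real"
  assumes sm: "smooth_on U \<phi>" "smooth_on U la" "smooth_on U lb" "smooth_on U f" "smooth_on U g"
    and nz: "\<forall>q\<in>U. la q \<noteq> lb q \<and> f q \<noteq> 0 \<and> g q \<noteq> 0"
    and sym_a: "\<forall>q\<in>U. Xvf la \<phi> q - Avf \<phi> la q = la q * la q"
    and sym_b: "\<forall>q\<in>U. Xvf lb \<phi> q - Avf \<phi> lb q = lb q * lb q"
    and f_X: "\<forall>q\<in>U. Xvf la f q * (la q - lb q) = (Xvf la lb q - Xvf lb la q) * f q"
    and g_A: "\<forall>q\<in>U. Avf \<phi> g q = (lb q - Avf \<phi> f q / f q) * g q"
    and g_X: "\<forall>q\<in>U. Xvf la g q = 0"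
  shows "closed_form_on U (\<lambda>q. (la q * snd (snd q) - \<phi> q) / (f q * g q * (lb q - la q)))
           (\<lambda>q. - la q / (f q * g q * (lb q - la q))) (\<lambda>q. 1 / (f q * g q * (lb q - la q)))"
  unfolding closed_form_on_def
proof
  fix q
  assume q: "q \<in> U"
  have D: "f q * g q * (lb q - la q) \<noteq> 0"
    using nz q by auto
  note d = has_derivative_pd[OF smooth_on_imp_differentiable[OF _ q]]
  note dD = has_derivative_jet_form_mult[OF has_derivative_jet_form_mult[OF d[OF sm(4)] d[OF sm(5)]]
      has_derivative_jet_form_diff[OF d[OF sm(3)] d[OF sm(2)]]]
  note dP = has_derivative_jet_form_divide[OF has_derivative_jet_form_diff[OF
        has_derivative_jet_form_mult[OF d[OF sm(2)] has_derivative_jet_form_ux] d[OF sm(1)]] dD D]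
  note dQ = has_derivative_jet_form_divide[OF has_derivative_jet_form_minus[OF d[OF sm(2)]] dD D]
  note dR = has_derivative_jet_form_divide[OF has_derivative_jet_form_const dD D]
  have hyps: "pd 1 \<phi> q + la q * pd 2 \<phi> q - (pd 0 la q + snd (snd q) * pd 1 la q + \<phi> q * pd 2 la q) = la q * la q"
    "pd 1 \<phi> q + lb q * pd 2 \<phi> q - (pd 0 lb q + snd (snd q) * pd 1 lb q + \<phi> q * pd 2 lb q) = lb q * lb q"
    "(pd 1 f q + la q * pd 2 f q) * (la q - lb q)
       = ((pd 1 lb q + la q * pd 2 lb q) - (pd 1 la q + lb q * pd 2 la q)) * f q"
    "pd 1 g q + la q * pd 2 g q = 0"
    using sym_a sym_b f_X g_X q by (simp_all add: Xvf_apply Avf_apply)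
  have hyp_gA: "f q * (pd 0 g q + snd (snd q) * pd 1 g q + \<phi> q * pd 2 g q)
                   = (lb q * f q - (pd 0 f q + snd (snd q) * pd 1 f q + \<phi> q * pd 2 f q)) * g q"
    using g_A q nz by (simp add: Avf_apply field_simps)
  have same_denominator: "a = X / Y \<Longrightarrow> b = Z / Y \<Longrightarrow> X = Z \<Longrightarrow> a = b" for a b X Y Z :: real
    by simp
  show "pd 1 (\<lambda>q. (la q * snd (snd q) - \<phi> q) / (f q * g q * (lb q - la q))) q
          = pd 0 (\<lambda>q. - la q / (f q * g q * (lb q - la q))) q
        \<and> pd 2 (\<lambda>q. (la q * snd (snd q) - \<phi> q) / (f q * g q * (lb q - la q))) q
          = pd 0 (\<lambda>q. 1 / (f q * g q * (lb q - la q))) q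
        \<and> pd 2 (\<lambda>q. - la q / (f q * g q * (lb q - la q))) q
          = pd 1 (\<lambda>q. 1 / (f q * g q * (lb q - la q))) q"
  proof (intro conjI)
    show "pd 1 (\<lambda>q. (la q * snd (snd q) - \<phi> q) / (f q * g q * (lb q - la q))) q
            = pd 0 (\<lambda>q. - la q / (f q * g q * (lb q - la q))) q"
      by (rule same_denominator[OF pd_eq_jet_form(2)[OF dP] pd_eq_jet_form(1)[OF dQ]])
        (use hyps hyp_gA in algebra)
    show "pd 2 (\<lambda>q. (la q * snd (snd q) - \<phi> q) / (f q * g q * (lb q - la q))) q
            = pd 0 (\<lambda>q. 1 / (f q * g q * (lb q - la q))) q"
      by (rule same_denominator[OF pd_eq_jet_form(3)[OF dP] pd_eq_jet_form(1)[OF dR]])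
        (use hyps hyp_gA in algebra)
    show "pd 2 (\<lambda>q. - la q / (f q * g q * (lb q - la q))) q
            = pd 1 (\<lambda>q. 1 / (f q * g q * (lb q - la q))) q"
      by (rule same_denominator[OF pd_eq_jet_form(3)[OF dQ] pd_eq_jet_form(2)[OF dR]])
        (use hyps hyp_gA in algebra)
  qed
qed

theorem theorem3:
  fixes U :: "jet set"
    and \<phi> lam1 lam2 f1 f2 g1 g2 :: "jet \<Rightarrow> real"
  defines "\<rho> \<equiv> (\<lambda>p. (Xvf lam1 lam2 p - Xvf lam2 lam1 p) / (lam1 p - lam2 p))"
    and "\<rho>1 \<equiv> (\<lambda>p. lam1 p - Avf \<phi> f1 p / f1 p)"
    and "\<rho>2 \<equiv> (\<lambda>p. lam2 p - Avf \<phi> f2 p / f2 p)"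
  assumes U_open: "open U"
    and sm: "smooth_on U \<phi>" "smooth_on U lam1" "smooth_on U lam2"
            "smooth_on U f1" "smooth_on U f2" "smooth_on U g1" "smooth_on U g2"
    and nz: "\<forall>p\<in>U. lam1 p - lam2 p \<noteq> 0 \<and> f1 p \<noteq> 0 \<and> f2 p \<noteq> 0 \<and> g1 p \<noteq> 0 \<and> g2 p \<noteq> 0"
    and sym1: "gen_sym U \<phi> (\<lambda>_. 0) (\<lambda>_. 1) lam1"
    and sym2: "gen_sym U \<phi> (\<lambda>_. 0) (\<lambda>_. 1) lam2"
    and noneq: "\<not> A_equiv U \<phi> (\<lambda>_. 0) (\<lambda>_. 1) lam1 (\<lambda>_. 0) (\<lambda>_. 1) lam2"
    and hf: "\<forall>p\<in>U. Xvf lam1 f2 p / f2 p = \<rho> p \<and> Xvf lam2 f1 p / f1 p = \<rho> p"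
    and hg1: "\<forall>p\<in>U. Avf \<phi> g1 p = \<rho>1 p * g1 p \<and> f2 p * Xvf lam2 g1 p = 0"
    and hg2: "\<forall>p\<in>U. Avf \<phi> g2 p = \<rho>2 p * g2 p \<and> f1 p * Xvf lam1 g2 p = 0"
  shows "(\<forall>p\<in>U. \<exists>V. open V \<and> p \<in> V \<and> V \<subseteq> U \<and> (\<exists>I1 I2.
            solves_sys V I1
              (\<lambda>q. (lam1 q * snd (snd q) - \<phi> q) / (f2 q * g2 q * (lam2 q - lam1 q)))
              (\<lambda>q. - lam1 q / (f2 q * g2 q * (lam2 q - lam1 q)))
              (\<lambda>q. 1 / (f2 q * g2 q * (lam2 q - lam1 q))) \<and>
            solves_sys V I2
              (\<lambda>q. (lam2 q * snd (snd q) - \<phi> q) / (f1 q * g1 q * (lam1 q - lam2 q)))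
              (\<lambda>q. - lam2 q / (f1 q * g1 q * (lam1 q - lam2 q)))
              (\<lambda>q. 1 / (f1 q * g1 q * (lam1 q - lam2 q)))))
       \<and> (\<forall>V I1 I2. open V \<and> V \<subseteq> U \<and>
            solves_sys V I1
              (\<lambda>q. (lam1 q * snd (snd q) - \<phi> q) / (f2 q * g2 q * (lam2 q - lam1 q)))
              (\<lambda>q. - lam1 q / (f2 q * g2 q * (lam2 q - lam1 q)))
              (\<lambda>q. 1 / (f2 q * g2 q * (lam2 q - lam1 q))) \<and>
            solves_sys V I2
              (\<lambda>q. (lam2 q * snd (snd q) - \<phi> q) / (f1 q * g1 q * (lam1 q - lam2 q)))
              (\<lambda>q. - lam2 q / (f1 q * g1 q * (lam1 q - lam2 q)))
              (\<lambda>q. 1 / (f1 q * g1 q * (lam1 q - lam2 q)))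
          \<longrightarrow> first_integral_assoc V \<phi> (\<lambda>_. 0) (\<lambda>_. 1) lam1 I1
            \<and> first_integral_assoc V \<phi> (\<lambda>_. 0) (\<lambda>_. 1) lam2 I2
            \<and> func_indep V I1 I2)"
proof -
  \<comment> \<open>\<open>noneq\<close> is unused: with \<open>lam1 \<noteq> lam2\<close> everywhere (\<open>nz\<close>) the two canonical
      representatives are automatically non-equivalent.\<close>
  define D1 where "D1 q = f2 q * g2 q * (lam2 q - lam1 q)" for q
  define D2 where "D2 q = f1 q * g1 q * (lam1 q - lam2 q)" for q
  have nz12: "\<forall>q\<in>U. lam1 q \<noteq> lam2 q \<and> f2 q \<noteq> 0 \<and> g2 q \<noteq> 0"
    "\<forall>q\<in>U. lam2 q \<noteq> lam1 q \<and> f1 q \<noteq> 0 \<and> g1 q \<noteq> 0"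
    using nz by auto
  have sym: "\<forall>q\<in>U. Xvf lam1 \<phi> q - Avf \<phi> lam1 q = lam1 q * lam1 q"
    "\<forall>q\<in>U. Xvf lam2 \<phi> q - Avf \<phi> lam2 q = lam2 q * lam2 q"
    using gen_sym_du_condition[OF sym1] gen_sym_du_condition[OF sym2] by blast+
  have f_X: "\<forall>q\<in>U. Xvf lam1 f2 q * (lam1 q - lam2 q) = (Xvf lam1 lam2 q - Xvf lam2 lam1 q) * f2 q"
    "\<forall>q\<in>U. Xvf lam2 f1 q * (lam2 q - lam1 q) = (Xvf lam2 lam1 q - Xvf lam1 lam2 q) * f1 q"
    using hf nz by (auto simp: \<rho>_def frac_eq_eq algebra_simps)
  have g: "\<forall>q\<in>U. Avf \<phi> g1 q = (lam1 q - Avf \<phi> f1 q / f1 q) * g1 q" "\<forall>q\<in>U. Xvf lam2 g1 q = 0"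
    "\<forall>q\<in>U. Avf \<phi> g2 q = (lam2 q - Avf \<phi> f2 q / f2 q) * g2 q" "\<forall>q\<in>U. Xvf lam1 g2 q = 0"
    using hg1 hg2 nz by (auto simp: \<rho>1_def \<rho>2_def)
  have "smooth_on U D1" "smooth_on U D2"
    unfolding D1_def D2_def using U_open sm by (auto intro!: smooth_on_mult smooth_on_diff)
  moreover have "\<forall>q\<in>U. lam1 q \<noteq> lam2 q \<and> D1 q \<noteq> 0 \<and> D2 q \<noteq> 0"
    using nz by (auto simp: D1_def D2_def)
  moreover note closed_form_on_quadrature[OF sm(1,2,3,5,7) nz12(1) sym f_X(1) g(3,4)]
    closed_form_on_quadrature[OF sm(1,3,2,4,6) nz12(2) sym(2,1) f_X(2) g(1,2)]
  ultimately show ?thesis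
    using first_integrals_by_quadratures[OF U_open sm(1,2,3), of D1 D2] unfolding D1_def D2_def
    by blast
qed

end
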